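(* Let $G=G_n$ be a sequence of graphs on $n$ vertices that are $(\varepsilon_n,2)$-quasirandom with $\varepsilon_n=o(1)$, with density $\gamma=d(G)$ satisfying $\gamma=\Omega(1)$ and $1-\gamma=\Omega(1)$. Let $X,Y,Z$ be sets of ordered pairs of distinct vertices of $G$, where within each of $X$, $Y$, $Z$ the pairs are pairwise disjoint, and suppose $|X|,|Y|,|Z|=\Omega(n)$. Then there are at least $\gamma^{3}|X||Y||Z|/8-o(n^{3})$ choices of $(x_1,x_2)\in X$, $(y_1,y_2)\in Y$, $(z_1,z_2)\in Z$ such that $\{x_1,y_2\}$, $\{y_1,z_2\}$ and $\{z_1,x_2\}$ are all edges of $G$.
   Context: For a graph $G$ with $n$ vertices and $m$ edges, $d(G)=m/\binom n2$, and $G$ is $(\varepsilon,h)$-quasirandom if every set $A$ of at most $h$ vertices satisfies $\left|\bigcap_{w\in A}N_G(w)\right|=(1\pm\varepsilon)d(G)^{|A|}n$, where $x=1\pm\varepsilon$ means $1-\varepsilon\le x\le1+\varepsilon$. Asymptotics are as $n\to\infty$. *)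

theory Defs
  imports Complex_Main
begin

definition simple_graph :: "nat \<Rightarrow> (nat \<Rightarrow> nat \<Rightarrow> bool) \<Rightarrow> bool" where
  "simple_graph n E \<longleftrightarrow> (\<forall>u v. E u v \<longrightarrow> E v u) \<and> (\<forall>u. \<not> E u u)
     \<and> (\<forall>u v. E u v \<longrightarrow> u < n \<and> v < n)"

definition edge_set :: "nat \<Rightarrow> (nat \<Rightarrow> nat \<Rightarrow> bool) \<Rightarrow> nat set set" where
  "edge_set n E = {{u, v} | u v. u < n \<and> v < n \<and> E u v}"

definition density :: "nat \<Rightarrow> (nat \<Rightarrow> nat \<Rightarrow> bool) \<Rightarrow> real" where
  "density n E = real (card (edge_set n E)) / real (n choose 2)"

text \<open>Common neighbourhood of a set A of vertices (whole vertex set if A is empty).\<close>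
definition common_nbhd :: "nat \<Rightarrow> (nat \<Rightarrow> nat \<Rightarrow> bool) \<Rightarrow> nat set \<Rightarrow> nat set" where
  "common_nbhd n E A = {v. v < n \<and> (\<forall>w\<in>A. E w v)}"

definition quasirandom :: "nat \<Rightarrow> (nat \<Rightarrow> nat \<Rightarrow> bool) \<Rightarrow> real \<Rightarrow> nat \<Rightarrow> bool" where
  "quasirandom n E eps h \<longleftrightarrow>
     (\<forall>A. A \<subseteq> {..<n} \<and> card A \<le> h \<longrightarrow>
        (1 - eps) * density n E ^ card A * real n \<le> real (card (common_nbhd n E A)) \<and>
        real (card (common_nbhd n E A)) \<le> (1 + eps) * density n E ^ card A * real n)"

definition disjoint_pairs :: "nat \<Rightarrow> (nat \<times> nat) set \<Rightarrow> bool" where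
  "disjoint_pairs n X \<longleftrightarrow> X \<subseteq> {..<n} \<times> {..<n} \<and> (\<forall>(a, b)\<in>X. a \<noteq> b) \<and>
     (\<forall>p\<in>X. \<forall>q\<in>X. p \<noteq> q \<longrightarrow> {fst p, snd p} \<inter> {fst q, snd q} = {})"

definition triangle_count ::
  "(nat \<Rightarrow> nat \<Rightarrow> bool) \<Rightarrow> (nat \<times> nat) set \<Rightarrow> (nat \<times> nat) set \<Rightarrow> (nat \<times> nat) set \<Rightarrow> nat" where
  "triangle_count E X Y Z = card {(x, y, z). x \<in> X \<and> y \<in> Y \<and> z \<in> Z \<and>
      E (fst x) (snd y) \<and> E (fst y) (snd z) \<and> E (fst z) (snd x)}"

end

theory Submission
  imports Defs
begin

(*
  Write x = (x1, x2) etc.  The number of triangles is the sum over x \<in> X, y \<in> Y with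
  x1 ~ y2 of L(y1, x2), where L(u, v) counts the z \<in> Z with z2 ~ u and z1 ~ v.
  Quasirandomness pins down all degrees and codegrees up to an error o(n); this determines
  the first two moments of L over all n^2 pairs (u, v), so L deviates from \<gamma>^2 |Z| by o(n^3)
  in total, and since (x, y) \<mapsto> (y1, x2) is injective on X \<times> Y, replacing L by \<gamma>^2 |Z|
  costs o(n^3).  The same second-moment argument for the number of neighbours of a vertex
  among the y2 shows that there are \<gamma> |X| |Y| - o(n^2) pairs with x1 ~ y2.  Square roots are avoided by |d| \<le> t/2 + d^2/(2t).
*)

lemma abs_le_by_square:
  fixes d t :: real
  assumes "t > 0"
  shows "\<bar>d\<bar> \<le> t / 2 + d^2 / (2 * t)"
proof -
  have "0 \<le> (\<bar>d\<bar> - t)^2" by simp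
  then have "2 * t * \<bar>d\<bar> \<le> d^2 + t^2" by (simp add: power2_eq_square algebra_simps)
  then show ?thesis using assms by (simp add: field_simps power2_eq_square)
qed

lemma sum_abs_le_by_sum_squares:
  fixes f :: "'a \<Rightarrow> real" and t :: real
  assumes "t > 0"
  shows "(\<Sum>x\<in>A. \<bar>f x\<bar>) \<le> real (card A) * t / 2 + (\<Sum>x\<in>A. (f x)^2) / (2 * t)"
proof -
  have "(\<Sum>x\<in>A. \<bar>f x\<bar>) \<le> (\<Sum>x\<in>A. t / 2 + (f x)^2 / (2 * t))"
    by (rule sum_mono) (rule abs_le_by_square[OF assms])
  also have "\<dots> = real (card A) * t / 2 + (\<Sum>x\<in>A. (f x)^2) / (2 * t)"
    by (simp add: sum.distrib sum_divide_distrib)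
  finally show ?thesis .
qed

lemma sum_squared_deviation_le:
  fixes f :: "'a \<Rightarrow> real" and c L U :: real
  assumes "0 \<le> c" "L \<le> (\<Sum>i\<in>I. f i)" "(\<Sum>i\<in>I. (f i)^2) \<le> U"
  shows "(\<Sum>i\<in>I. (f i - c)^2) \<le> U - 2 * c * L + real (card I) * c^2"
proof -
  have "(\<Sum>i\<in>I. (f i - c)^2) = (\<Sum>i\<in>I. (f i)^2) - 2 * c * (\<Sum>i\<in>I. f i) + real (card I) * c^2"
    by (simp add: power2_eq_square algebra_simps sum.distrib sum_subtractf sum_distrib_left
        sum_distrib_right)
  also have "\<dots> \<le> U - 2 * c * L + real (card I) * c^2"
    using assms mult_left_mono[OF assms(2), of "2 * c"] by simp
  finally show ?thesis .
qed

lemma abs_mult_diff_le: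
  fixes a b p q e m r :: real
  assumes "\<bar>a - p\<bar> \<le> e" "\<bar>b - q\<bar> \<le> e" "\<bar>b\<bar> \<le> m" "\<bar>p\<bar> \<le> r"
  shows "\<bar>a * b - p * q\<bar> \<le> e * m + r * e"
proof -
  have "a * b - p * q = (a - p) * b + p * (b - q)" by (simp add: algebra_simps)
  then have "\<bar>a * b - p * q\<bar> \<le> \<bar>a - p\<bar> * \<bar>b\<bar> + \<bar>p\<bar> * \<bar>b - q\<bar>"
    by (simp add: abs_mult[symmetric] abs_triangle_ineq)
  also have "\<dots> \<le> e * m + r * e"
    using assms by (intro add_mono mult_mono) auto
  finally show ?thesis .
qed

lemma abs_diff_le_of_relative_bounds:
  fixes x m e :: real
  assumes "0 \<le> m" "(1 - e) * m \<le> x" "x \<le> (1 + e) * m"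
  shows "\<bar>x - m\<bar> \<le> \<bar>e\<bar> * m"
  using assms mult_right_mono[OF abs_ge_self assms(1), of e]
    mult_right_mono[OF abs_ge_minus_self assms(1), of e]
  by (simp add: abs_le_iff algebra_simps)

definition adj :: "(nat \<Rightarrow> nat \<Rightarrow> bool) \<Rightarrow> nat \<Rightarrow> nat \<Rightarrow> real" where
  "adj E u v = (if E u v then 1 else 0)"

definition degree :: "(nat \<Rightarrow> nat \<Rightarrow> bool) \<Rightarrow> nat \<Rightarrow> nat \<Rightarrow> real" where
  "degree E n a = (\<Sum>v<n. adj E a v)"

definition codegree :: "(nat \<Rightarrow> nat \<Rightarrow> bool) \<Rightarrow> nat \<Rightarrow> nat \<Rightarrow> nat \<Rightarrow> real" where
  "codegree E n a b = (\<Sum>v<n. adj E a v * adj E b v)"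

definition link_count :: "(nat \<Rightarrow> nat \<Rightarrow> bool) \<Rightarrow> (nat \<times> nat) set \<Rightarrow> nat \<Rightarrow> nat \<Rightarrow> real" where
  "link_count E Z u v = (\<Sum>z\<in>Z. adj E (snd z) u * adj E (fst z) v)"

lemma adj_nonneg [simp]: "0 \<le> adj E u v"
  and adj_le_one [simp]: "adj E u v \<le> 1"
  by (auto simp: adj_def)

lemma degree_le: "degree E n a \<le> n"
proof -
  have "degree E n a \<le> (\<Sum>v<n. 1)" unfolding degree_def by (rule sum_mono) simp
  then show ?thesis by simp
qed

lemma codegree_nonneg: "0 \<le> codegree E n a b"
  by (simp add: codegree_def sum_nonneg)

lemma codegree_le: "codegree E n a b \<le> n"
proof -
  have "codegree E n a b \<le> (\<Sum>v<n. 1)" unfolding codegree_def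
    by (rule sum_mono) (simp add: mult_le_one)
  then show ?thesis by simp
qed

lemma card_common_nbhd_singleton: "real (card (common_nbhd n E {a})) = degree E n a"
proof -
  have "common_nbhd n E {a} = {v \<in> {..<n}. E a v}" by (auto simp: common_nbhd_def)
  then show ?thesis by (simp add: degree_def adj_def sum.If_cases Int_def)
qed

lemma card_common_nbhd_doubleton: "real (card (common_nbhd n E {a, b})) = codegree E n a b"
proof -
  have "common_nbhd n E {a, b} = {v \<in> {..<n}. E a v \<and> E b v}" by (auto simp: common_nbhd_def)
  then have "real (card (common_nbhd n E {a, b})) = (\<Sum>v<n. if E a v \<and> E b v then 1 else 0)"
    by (simp add: sum.If_cases Int_def)
  then show ?thesis by (auto simp: codegree_def adj_def intro!: sum.cong)
qed

lemma disjoint_pairs_finite: "disjoint_pairs n X \<Longrightarrow> finite X"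
  unfolding disjoint_pairs_def by (meson finite_SigmaI finite_lessThan finite_subset)

lemma disjoint_pairs_fst_less: "disjoint_pairs n X \<Longrightarrow> p \<in> X \<Longrightarrow> fst p < n"
  and disjoint_pairs_snd_less: "disjoint_pairs n X \<Longrightarrow> p \<in> X \<Longrightarrow> snd p < n"
  by (auto simp: disjoint_pairs_def)

lemma disjoint_pairs_distinct:
  assumes "disjoint_pairs n X" "p \<in> X" "q \<in> X" "p \<noteq> q"
  shows "fst p \<noteq> fst q" "snd p \<noteq> snd q"
proof -
  have "{fst p, snd p} \<inter> {fst q, snd q} = {}"
    using assms unfolding disjoint_pairs_def by blast
  then show "fst p \<noteq> fst q" "snd p \<noteq> snd q" by auto
qed

lemma disjoint_pairs_inj_fst: "disjoint_pairs n X \<Longrightarrow> inj_on fst X"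
  and disjoint_pairs_inj_snd: "disjoint_pairs n X \<Longrightarrow> inj_on snd X"
  by (meson disjoint_pairs_distinct inj_onI)+

lemma disjoint_pairs_card_le:
  assumes "disjoint_pairs n X"
  shows "card X \<le> n"
proof -
  have "card X = card (fst ` X)"
    using disjoint_pairs_inj_fst[OF assms] by (simp add: card_image)
  also have "\<dots> \<le> card {..<n}"
    using disjoint_pairs_fst_less[OF assms] by (intro card_mono) auto
  finally show ?thesis by simp
qed

lemma sum_disjoint_pairs_le:
  fixes g :: "nat \<times> nat \<Rightarrow> real"
  assumes X: "disjoint_pairs n X" and Y: "disjoint_pairs n Y" and g: "\<And>q. 0 \<le> g q"
  shows "(\<Sum>x\<in>X. \<Sum>y\<in>Y. g (fst y, snd x)) \<le> (\<Sum>q\<in>{..<n} \<times> {..<n}. g q)"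
proof -
  define h where "h p = (fst (snd p), snd (fst p))" for p :: "(nat \<times> nat) \<times> nat \<times> nat"
  have inj: "inj_on h (X \<times> Y)"
    using disjoint_pairs_inj_snd[OF X] disjoint_pairs_inj_fst[OF Y]
    by (auto simp: h_def inj_on_def)
  have "(\<Sum>x\<in>X. \<Sum>y\<in>Y. g (fst y, snd x)) = (\<Sum>p\<in>X \<times> Y. g (h p))"
    by (simp add: sum.cartesian_product h_def case_prod_beta)
  also have "\<dots> = (\<Sum>q\<in>h ` (X \<times> Y). g q)"
    by (simp add: sum.reindex[OF inj])
  also have "\<dots> \<le> (\<Sum>q\<in>{..<n} \<times> {..<n}. g q)"
    using disjoint_pairs_snd_less[OF X] disjoint_pairs_fst_less[OF Y]
    by (intro sum_mono2) (auto simp: h_def g)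
  finally show ?thesis .
qed

lemma sum_nbrs_in_set: "(\<Sum>u<n. \<Sum>a\<in>B. adj E a u) = (\<Sum>a\<in>B. degree E n a)"
  unfolding degree_def by (rule sum.swap)

lemma sum_nbrs_in_set_squared:
  "(\<Sum>u<n. (\<Sum>a\<in>B. adj E a u)^2) = (\<Sum>a\<in>B. \<Sum>b\<in>B. codegree E n a b)"
proof -
  have "(\<Sum>u<n. (\<Sum>a\<in>B. adj E a u)^2) = (\<Sum>u<n. \<Sum>a\<in>B. \<Sum>b\<in>B. adj E a u * adj E b u)"
    by (simp add: power2_eq_square sum_product)
  also have "\<dots> = (\<Sum>a\<in>B. \<Sum>b\<in>B. \<Sum>u<n. adj E a u * adj E b u)"
    by (subst sum.swap) (simp add: sum.swap[of _ "{..<n}"])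
  finally show ?thesis by (simp add: codegree_def)
qed

lemma sum_link_count:
  "(\<Sum>q\<in>{..<n} \<times> {..<n}. link_count E Z (fst q) (snd q))
    = (\<Sum>z\<in>Z. degree E n (snd z) * degree E n (fst z))"
proof -
  have "(\<Sum>q\<in>{..<n} \<times> {..<n}. link_count E Z (fst q) (snd q))
      = (\<Sum>u<n. \<Sum>v<n. \<Sum>z\<in>Z. adj E (snd z) u * adj E (fst z) v)"
    by (simp add: sum.cartesian_product' link_count_def)
  also have "\<dots> = (\<Sum>u<n. \<Sum>z\<in>Z. \<Sum>v<n. adj E (snd z) u * adj E (fst z) v)"
    by (intro sum.cong refl sum.swap)
  also have "\<dots> = (\<Sum>z\<in>Z. \<Sum>u<n. \<Sum>v<n. adj E (snd z) u * adj E (fst z) v)"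
    by (rule sum.swap)
  also have "\<dots> = (\<Sum>z\<in>Z. degree E n (snd z) * degree E n (fst z))"
    by (simp add: degree_def sum_product)
  finally show ?thesis .
qed

lemma sum_link_count_squared:
  "(\<Sum>q\<in>{..<n} \<times> {..<n}. (link_count E Z (fst q) (snd q))^2)
    = (\<Sum>z\<in>Z. \<Sum>z'\<in>Z. codegree E n (snd z) (snd z') * codegree E n (fst z) (fst z'))"
proof -
  define f where "f z z' u v = (adj E (snd z) u * adj E (snd z') u) * (adj E (fst z) v * adj E (fst z') v)"
    for z z' :: "nat \<times> nat" and u v
  have "(\<Sum>q\<in>{..<n} \<times> {..<n}. (link_count E Z (fst q) (snd q))^2)
      = (\<Sum>q\<in>{..<n} \<times> {..<n}. \<Sum>z\<in>Z. \<Sum>z'\<in>Z. f z z' (fst q) (snd q))"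
    by (simp add: f_def link_count_def power2_eq_square sum_product mult_ac)
  also have "\<dots> = (\<Sum>z\<in>Z. \<Sum>q\<in>{..<n} \<times> {..<n}. \<Sum>z'\<in>Z. f z z' (fst q) (snd q))"
    by (rule sum.swap)
  also have "\<dots> = (\<Sum>z\<in>Z. \<Sum>z'\<in>Z. \<Sum>q\<in>{..<n} \<times> {..<n}. f z z' (fst q) (snd q))"
    by (intro sum.cong refl sum.swap)
  also have "\<dots> = (\<Sum>z\<in>Z. \<Sum>z'\<in>Z. codegree E n (snd z) (snd z') * codegree E n (fst z) (fst z'))"
    by (simp add: f_def sum.cartesian_product' codegree_def sum_product)
  finally show ?thesis .
qed

locale near_regular_graph =
  fixes E :: "nat \<Rightarrow> nat \<Rightarrow> bool" and n :: nat and \<gamma> \<eta> :: real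
  assumes edge_sym: "E u v \<Longrightarrow> E v u"
    and gamma_nonneg: "0 \<le> \<gamma>" and gamma_le_two: "\<gamma> \<le> 2"
    and eta_nonneg: "0 \<le> \<eta>"
    and degree_close: "a < n \<Longrightarrow> \<bar>degree E n a - \<gamma> * n\<bar> \<le> \<eta> * n"
    and codegree_close:
      "a < n \<Longrightarrow> b < n \<Longrightarrow> a \<noteq> b \<Longrightarrow> \<bar>codegree E n a b - \<gamma>^2 * n\<bar> \<le> \<eta> * n"
begin

lemma adj_commute: "adj E u v = adj E v u"
  using edge_sym by (auto simp: adj_def)

lemma triangle_count_eq_sum:
  assumes "finite X" "finite Y" "finite Z"
  shows "real (triangle_count E X Y Z) =
    (\<Sum>x\<in>X. \<Sum>y\<in>Y. adj E (fst x) (snd y) * link_count E Z (fst y) (snd x))"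
proof -
  let ?T = "{t \<in> X \<times> Y \<times> Z. case t of (x, y, z) \<Rightarrow>
      E (fst x) (snd y) \<and> E (fst y) (snd z) \<and> E (fst z) (snd x)}"
  have "triangle_count E X Y Z = card ?T"
    unfolding triangle_count_def by (rule arg_cong[where f = card]) auto
  also have "real (card ?T) = (\<Sum>t\<in>X \<times> Y \<times> Z. case t of (x, y, z) \<Rightarrow>
      if E (fst x) (snd y) \<and> E (fst y) (snd z) \<and> E (fst z) (snd x) then 1 else 0)"
    using assms by (simp add: sum.If_cases Int_def case_prod_beta)
  also have "\<dots> = (\<Sum>(x, y, z)\<in>X \<times> Y \<times> Z.
      adj E (fst x) (snd y) * adj E (fst y) (snd z) * adj E (fst z) (snd x))"
    by (intro sum.cong) (auto simp: adj_def)
  also have "\<dots> = (\<Sum>x\<in>X. \<Sum>y\<in>Y. \<Sum>z\<in>Z.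
      adj E (fst x) (snd y) * (adj E (fst y) (snd z) * adj E (fst z) (snd x)))"
    by (simp add: sum.cartesian_product mult.assoc)
  finally show ?thesis
    by (simp add: link_count_def sum_distrib_left adj_commute[of "fst _" "snd _"])
qed

lemma gamma_sq_le_four: "\<gamma>^2 \<le> 4"
  using power_mono[OF gamma_le_two gamma_nonneg, of 2] by simp

lemma sum_codegree_le:
  assumes B: "B \<subseteq> {..<n}"
  shows "(\<Sum>a\<in>B. \<Sum>a'\<in>B. codegree E n a a') \<le> card B * card B * ((\<gamma>^2 + \<eta>) * n) + card B * n"
proof -
  have "(\<Sum>a\<in>B. \<Sum>a'\<in>B. codegree E n a a')
      \<le> (\<Sum>a\<in>B. \<Sum>a'\<in>B. (\<gamma>^2 + \<eta>) * n + (if a = a' then real n else 0))"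
  proof (intro sum_mono)
    fix a a' assume "a \<in> B" "a' \<in> B"
    then have "a < n" "a' < n" using B by auto
    moreover have "0 \<le> (\<gamma>^2 + \<eta>) * n" using eta_nonneg by simp
    ultimately show "codegree E n a a' \<le> (\<gamma>^2 + \<eta>) * n + (if a = a' then real n else 0)"
      using codegree_close[of a a'] codegree_le[of E n a a'] by (auto simp: abs_le_iff algebra_simps)
  qed
  also have "\<dots> = card B * card B * ((\<gamma>^2 + \<eta>) * n) + card B * n"
    using finite_subset[OF B] by (simp add: sum.distrib algebra_simps)
  finally show ?thesis .
qed

lemma nbrs_in_set_variance:
  assumes B: "B \<subseteq> {..<n}"
  shows "(\<Sum>u<n. ((\<Sum>a\<in>B. adj E a u) - \<gamma> * card B)^2) \<le> 5 * \<eta> * n^3 + n^2"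
proof -
  define b where "b = real (card B)"
  have b: "0 \<le> b" "b \<le> n"
    using card_mono[OF _ B] by (auto simp: b_def)
  have "(\<Sum>a\<in>B. (\<gamma> - \<eta>) * n) \<le> (\<Sum>a\<in>B. degree E n a)"
  proof (rule sum_mono)
    fix a assume "a \<in> B"
    then show "(\<gamma> - \<eta>) * n \<le> degree E n a"
      using degree_close[of a] B by (auto simp: algebra_simps abs_le_iff)
  qed
  then have first: "b * ((\<gamma> - \<eta>) * n) \<le> (\<Sum>u<n. \<Sum>a\<in>B. adj E a u)"
    by (simp add: sum_nbrs_in_set b_def)
  have second: "(\<Sum>u<n. (\<Sum>a\<in>B. adj E a u)^2) \<le> b * b * ((\<gamma>^2 + \<eta>) * n) + b * n"
    using sum_codegree_le[OF B] by (simp add: sum_nbrs_in_set_squared b_def)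
  have "(\<Sum>u<n. ((\<Sum>a\<in>B. adj E a u) - \<gamma> * b)^2)
      \<le> b * b * ((\<gamma>^2 + \<eta>) * n) + b * n - 2 * (\<gamma> * b) * (b * ((\<gamma> - \<eta>) * n)) + n * (\<gamma> * b)^2"
    using sum_squared_deviation_le[OF _ first second] gamma_nonneg b by simp
  also have "\<dots> = b * b * (\<eta> * n * (1 + 2 * \<gamma>)) + b * n"
    by (simp add: algebra_simps power2_eq_square)
  also have "\<dots> \<le> n * n * (\<eta> * n * 5) + n * n"
  proof -
    have "b * b \<le> n * n" using b by (simp add: mult_mono)
    moreover have "\<eta> * n * (1 + 2 * \<gamma>) \<le> \<eta> * n * 5"
      using eta_nonneg gamma_le_two by (intro mult_left_mono) auto
    moreover have "b * n \<le> n * n" using b by (simp add: mult_right_mono)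
    ultimately show ?thesis using eta_nonneg gamma_nonneg
      by (intro add_mono[OF mult_mono]) auto
  qed
  finally show ?thesis by (simp add: b_def power3_eq_cube power2_eq_square algebra_simps)
qed

lemma degree_product_ge:
  assumes "a < n" "b < n"
  shows "\<gamma>^2 * n^2 - 3 * \<eta> * n^2 \<le> degree E n a * degree E n b"
proof -
  have "\<bar>degree E n a * degree E n b - (\<gamma> * n) * (\<gamma> * n)\<bar> \<le> (\<eta> * n) * n + (2 * n) * (\<eta> * n)"
  proof (rule abs_mult_diff_le)
    show "\<bar>degree E n a - \<gamma> * n\<bar> \<le> \<eta> * n" "\<bar>degree E n b - \<gamma> * n\<bar> \<le> \<eta> * n"
      using assms degree_close by auto
    show "\<bar>degree E n b\<bar> \<le> n"
      using degree_le[of E n b] by (simp add: degree_def sum_nonneg)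
    show "\<bar>\<gamma> * n\<bar> \<le> 2 * n"
      using gamma_nonneg gamma_le_two by (simp add: abs_mult mult_right_mono)
  qed
  then show ?thesis by (simp add: abs_le_iff algebra_simps power2_eq_square)
qed

lemma codegree_product_le:
  assumes "a < n" "a' < n" "b < n" "b' < n" "a \<noteq> a'" "b \<noteq> b'"
  shows "codegree E n a a' * codegree E n b b' \<le> \<gamma>^4 * n^2 + 5 * \<eta> * n^2"
proof -
  have "\<bar>codegree E n a a' * codegree E n b b' - (\<gamma>^2 * n) * (\<gamma>^2 * n)\<bar>
      \<le> (\<eta> * n) * n + (4 * n) * (\<eta> * n)"
  proof (rule abs_mult_diff_le)
    show "\<bar>codegree E n a a' - \<gamma>^2 * n\<bar> \<le> \<eta> * n" "\<bar>codegree E n b b' - \<gamma>^2 * n\<bar> \<le> \<eta> * n"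
      using assms codegree_close by auto
    show "\<bar>codegree E n b b'\<bar> \<le> n"
      using codegree_le[of E n b b'] codegree_nonneg[of E n b b'] by simp
    show "\<bar>\<gamma>^2 * n\<bar> \<le> 4 * n"
      using gamma_sq_le_four by (simp add: abs_mult mult_right_mono)
  qed
  then show ?thesis by (simp add: abs_le_iff algebra_simps power2_eq_square power4_eq_xxxx)
qed

lemma sum_codegree_products_le:
  assumes Z: "disjoint_pairs n Z"
  shows "(\<Sum>z\<in>Z. \<Sum>z'\<in>Z. codegree E n (snd z) (snd z') * codegree E n (fst z) (fst z'))
    \<le> card Z * card Z * (\<gamma>^4 * n^2 + 5 * \<eta> * n^2) + card Z * n^2"
proof -
  have Z_less: "fst z < n" "snd z < n" if "z \<in> Z" for z
    using that disjoint_pairs_fst_less[OF Z] disjoint_pairs_snd_less[OF Z] by auto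
  have "(\<Sum>z\<in>Z. \<Sum>z'\<in>Z. codegree E n (snd z) (snd z') * codegree E n (fst z) (fst z'))
      \<le> (\<Sum>z\<in>Z. \<Sum>z'\<in>Z. (\<gamma>^4 * n^2 + 5 * \<eta> * n^2) + (if z = z' then real n^2 else 0))"
  proof (intro sum_mono)
    fix z z' assume zz': "z \<in> Z" "z' \<in> Z"
    show "codegree E n (snd z) (snd z') * codegree E n (fst z) (fst z')
        \<le> (\<gamma>^4 * n^2 + 5 * \<eta> * n^2) + (if z = z' then real n^2 else 0)"
    proof (cases "z = z'")
      case True
      have "codegree E n (snd z) (snd z') * codegree E n (fst z) (fst z') \<le> real n * real n"
        by (intro mult_mono codegree_le codegree_nonneg) auto
      moreover have "0 \<le> \<gamma>^4 * n^2 + 5 * \<eta> * n^2" using eta_nonneg by simp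
      ultimately show ?thesis using True by (simp add: power2_eq_square)
    next
      case False
      then show ?thesis
        using codegree_product_le Z_less zz' disjoint_pairs_distinct[OF Z zz' False] by simp
    qed
  qed
  also have "\<dots> = card Z * card Z * (\<gamma>^4 * n^2 + 5 * \<eta> * n^2) + card Z * n^2"
    using disjoint_pairs_finite[OF Z] by (simp add: sum.distrib algebra_simps)
  finally show ?thesis .
qed

lemma link_count_variance:
  assumes Z: "disjoint_pairs n Z"
  shows "(\<Sum>q\<in>{..<n} \<times> {..<n}. (link_count E Z (fst q) (snd q) - \<gamma>^2 * card Z)^2)
    \<le> 29 * \<eta> * n^4 + n^3"
proof -
  define c where "c = real (card Z)"
  have c: "0 \<le> c" "c \<le> n"
    using disjoint_pairs_card_le[OF Z] by (auto simp: c_def)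
  have Z_less: "fst z < n" "snd z < n" if "z \<in> Z" for z
    using that disjoint_pairs_fst_less[OF Z] disjoint_pairs_snd_less[OF Z] by auto
  have "(\<Sum>z\<in>Z. \<gamma>^2 * n^2 - 3 * \<eta> * n^2) \<le> (\<Sum>z\<in>Z. degree E n (snd z) * degree E n (fst z))"
    by (intro sum_mono degree_product_ge Z_less)
  then have first: "c * (\<gamma>^2 * n^2 - 3 * \<eta> * n^2)
      \<le> (\<Sum>q\<in>{..<n} \<times> {..<n}. link_count E Z (fst q) (snd q))"
    by (simp add: sum_link_count c_def)
  have second: "(\<Sum>q\<in>{..<n} \<times> {..<n}. (link_count E Z (fst q) (snd q))^2)
      \<le> c * c * (\<gamma>^4 * n^2 + 5 * \<eta> * n^2) + c * n^2"
    using sum_codegree_products_le[OF Z] by (simp add: sum_link_count_squared c_def)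
  have "(\<Sum>q\<in>{..<n} \<times> {..<n}. (link_count E Z (fst q) (snd q) - \<gamma>^2 * c)^2)
      \<le> c * c * (\<gamma>^4 * n^2 + 5 * \<eta> * n^2) + c * n^2
         - 2 * (\<gamma>^2 * c) * (c * (\<gamma>^2 * n^2 - 3 * \<eta> * n^2)) + n^2 * (\<gamma>^2 * c)^2"
    using sum_squared_deviation_le[OF _ first second] c
    by (simp add: card_cartesian_product power2_eq_square)
  also have "\<dots> = c * c * (\<eta> * n^2 * (5 + 6 * \<gamma>^2)) + c * n^2"
    by (simp add: algebra_simps power2_eq_square power4_eq_xxxx)
  also have "\<dots> \<le> n * n * (\<eta> * n^2 * 29) + n * n^2"
  proof -
    have "c * c \<le> n * n" using c by (simp add: mult_mono)
    moreover have "\<eta> * n^2 * (5 + 6 * \<gamma>^2) \<le> \<eta> * n^2 * 29"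
      using eta_nonneg gamma_sq_le_four by (intro mult_left_mono) auto
    moreover have "c * n^2 \<le> n * n^2" using c by (simp add: mult_right_mono)
    ultimately show ?thesis using eta_nonneg
      by (intro add_mono[OF mult_mono]) auto
  qed
  finally show ?thesis by (simp add: c_def power3_eq_cube power4_eq_xxxx power2_eq_square algebra_simps)
qed

lemma cross_edges_ge:
  fixes \<theta> :: real
  assumes X: "disjoint_pairs n X" and Y: "disjoint_pairs n Y" and "0 < n" "0 < \<theta>"
  shows "\<gamma> * card X * card Y - (\<Sum>x\<in>X. \<Sum>y\<in>Y. adj E (fst x) (snd y))
    \<le> \<theta> * n^2 / 2 + (5 * \<eta> * n^2 + n) / (2 * \<theta>)"
proof -
  define B where "B = snd ` Y"
  define N where "N u = (\<Sum>a\<in>B. adj E a u)" for u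
  have card_B: "card B = card Y"
    unfolding B_def by (rule card_image[OF disjoint_pairs_inj_snd[OF Y]])
  have B: "B \<subseteq> {..<n}"
    using disjoint_pairs_snd_less[OF Y] by (auto simp: B_def)
  have "(\<Sum>x\<in>X. \<Sum>y\<in>Y. adj E (fst x) (snd y)) = (\<Sum>u\<in>fst ` X. N u)"
    by (simp add: N_def B_def sum.reindex disjoint_pairs_inj_fst[OF X]
        disjoint_pairs_inj_snd[OF Y] adj_commute[of "fst _"])
  then have "\<gamma> * card X * card Y - (\<Sum>x\<in>X. \<Sum>y\<in>Y. adj E (fst x) (snd y))
      = (\<Sum>u\<in>fst ` X. \<gamma> * card B - N u)"
    by (simp add: sum_subtractf card_B card_image[OF disjoint_pairs_inj_fst[OF X]])
  also have "\<dots> \<le> (\<Sum>u<n. \<bar>N u - \<gamma> * card B\<bar>)"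
    using disjoint_pairs_fst_less[OF X]
    by (intro order.trans[OF sum_mono sum_mono2]) auto
  also have "\<dots> \<le> n * (\<theta> * n) / 2 + (\<Sum>u<n. (N u - \<gamma> * card B)^2) / (2 * (\<theta> * n))"
    using sum_abs_le_by_sum_squares[where t = "\<theta> * n" and A = "{..<n}"] assms by simp
  also have "\<dots> \<le> n * (\<theta> * n) / 2 + (5 * \<eta> * n^3 + n^2) / (2 * (\<theta> * n))"
    using nbrs_in_set_variance[OF B] assms by (simp add: N_def divide_right_mono)
  also have "\<dots> = \<theta> * n^2 / 2 + (5 * \<eta> * n^2 + n) / (2 * \<theta>)"
    using assms by (simp add: field_simps power3_eq_cube power2_eq_square)
  finally show ?thesis .
qed

lemma triangle_count_ge_link_deviation:
  assumes "finite X" "finite Y" "finite Z"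
  shows "\<gamma>^2 * card Z * (\<Sum>x\<in>X. \<Sum>y\<in>Y. adj E (fst x) (snd y))
      - (\<Sum>x\<in>X. \<Sum>y\<in>Y. \<bar>link_count E Z (fst y) (snd x) - \<gamma>^2 * card Z\<bar>)
    \<le> real (triangle_count E X Y Z)"
proof -
  have pointwise: "a * (\<gamma>^2 * card Z) - \<bar>l - \<gamma>^2 * card Z\<bar> \<le> a * l"
    if "0 \<le> a" "a \<le> 1" for a l :: real
  proof -
    have "\<bar>a * (l - \<gamma>^2 * card Z)\<bar> \<le> \<bar>l - \<gamma>^2 * card Z\<bar>"
      using that by (simp add: abs_mult mult_left_le_one_le)
    then show ?thesis by (simp add: abs_le_iff algebra_simps)
  qed
  have "\<gamma>^2 * card Z * (\<Sum>x\<in>X. \<Sum>y\<in>Y. adj E (fst x) (snd y))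
      - (\<Sum>x\<in>X. \<Sum>y\<in>Y. \<bar>link_count E Z (fst y) (snd x) - \<gamma>^2 * card Z\<bar>)
      = (\<Sum>x\<in>X. \<Sum>y\<in>Y. adj E (fst x) (snd y) * (\<gamma>^2 * card Z)
          - \<bar>link_count E Z (fst y) (snd x) - \<gamma>^2 * card Z\<bar>)"
    by (simp add: sum_subtractf sum_distrib_left mult_ac)
  also have "\<dots> \<le> (\<Sum>x\<in>X. \<Sum>y\<in>Y. adj E (fst x) (snd y) * link_count E Z (fst y) (snd x))"
    by (intro sum_mono pointwise) simp_all
  also have "\<dots> = real (triangle_count E X Y Z)"
    using assms by (simp add: triangle_count_eq_sum)
  finally show ?thesis .
qed

lemma sum_abs_link_deviation_le:
  fixes \<theta> :: real
  assumes Z: "disjoint_pairs n Z" and "0 < n" "0 < \<theta>"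
  shows "(\<Sum>q\<in>{..<n} \<times> {..<n}. \<bar>link_count E Z (fst q) (snd q) - \<gamma>^2 * card Z\<bar>)
    \<le> \<theta> * n^3 / 2 + (29 * \<eta> * n^3 + n^2) / (2 * \<theta>)"
proof -
  have "(\<Sum>q\<in>{..<n} \<times> {..<n}. \<bar>link_count E Z (fst q) (snd q) - \<gamma>^2 * card Z\<bar>)
      \<le> real (card ({..<n} \<times> {..<n})) * (\<theta> * n) / 2
        + (\<Sum>q\<in>{..<n} \<times> {..<n}. (link_count E Z (fst q) (snd q) - \<gamma>^2 * card Z)^2) / (2 * (\<theta> * n))"
    using sum_abs_le_by_sum_squares[where t = "\<theta> * n" and A = "{..<n} \<times> {..<n}"] assms
    by simp
  also have "\<dots> \<le> n * n * (\<theta> * n) / 2 + (29 * \<eta> * n^4 + n^3) / (2 * (\<theta> * n))"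
    using link_count_variance[OF Z] assms
    by (simp add: card_cartesian_product divide_right_mono)
  also have "\<dots> = \<theta> * n^3 / 2 + (29 * \<eta> * n^3 + n^2) / (2 * \<theta>)"
    using assms by (simp add: field_simps power3_eq_cube power4_eq_xxxx power2_eq_square)
  finally show ?thesis .
qed

lemma triangle_count_ge:
  fixes \<theta> :: real
  assumes X: "disjoint_pairs n X" and Y: "disjoint_pairs n Y" and Z: "disjoint_pairs n Z"
    and n: "0 < n" and \<theta>: "0 < \<theta>"
  shows "\<gamma>^3 * card X * card Y * card Z - (5 * \<theta> * n^3 / 2 + (49 * \<eta> * n^3 + 5 * n^2) / (2 * \<theta>))
    \<le> real (triangle_count E X Y Z)"
proof -
  define P where "P = (\<Sum>x\<in>X. \<Sum>y\<in>Y. adj E (fst x) (snd y))"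
  define err where "err = \<theta> * n^2 / 2 + (5 * \<eta> * n^2 + n) / (2 * \<theta>)"
  have err: "0 \<le> err" using \<theta> eta_nonneg by (simp add: err_def)
  have "\<gamma>^2 * card Z * (\<gamma> * card X * card Y - err) \<le> \<gamma>^2 * card Z * P"
    using cross_edges_ge[OF X Y n \<theta>] by (intro mult_left_mono) (auto simp: P_def err_def)
  moreover have "\<gamma>^2 * card Z * err \<le> 4 * n * err"
  proof (rule mult_right_mono[OF _ err])
    show "\<gamma>^2 * card Z \<le> 4 * n"
      using mult_mono[OF gamma_sq_le_four of_nat_mono[OF disjoint_pairs_card_le[OF Z]]] by simp
  qed
  moreover have "\<gamma>^2 * card Z * P - (\<theta> * n^3 / 2 + (29 * \<eta> * n^3 + n^2) / (2 * \<theta>))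
      \<le> real (triangle_count E X Y Z)"
    using triangle_count_ge_link_deviation[of X Y Z] sum_abs_link_deviation_le[OF Z n \<theta>]
      sum_disjoint_pairs_le[OF X Y, of "\<lambda>q. \<bar>link_count E Z (fst q) (snd q) - \<gamma>^2 * card Z\<bar>"]
      X Y Z by (simp add: P_def disjoint_pairs_finite)
  moreover have "4 * n * err + (\<theta> * n^3 / 2 + (29 * \<eta> * n^3 + n^2) / (2 * \<theta>))
      = 5 * \<theta> * n^3 / 2 + (49 * \<eta> * n^3 + 5 * n^2) / (2 * \<theta>)"
    using \<theta> by (simp add: err_def field_simps power3_eq_cube power2_eq_square)
  ultimately show ?thesis
    by (simp add: algebra_simps power3_eq_cube power2_eq_square)
qed

end

lemma density_nonneg: "0 \<le> density n E"
  by (simp add: density_def)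

lemma quasirandom_common_nbhd:
  assumes "quasirandom n E e h" "A \<subseteq> {..<n}" "card A \<le> h"
  shows "\<bar>card (common_nbhd n E A) - density n E ^ card A * n\<bar> \<le> \<bar>e\<bar> * (density n E ^ card A * n)"
  using assms density_nonneg
  by (intro abs_diff_le_of_relative_bounds) (auto simp: quasirandom_def mult.assoc)

lemma quasirandom_degree_close:
  assumes "quasirandom n E e 2" "a < n"
  shows "\<bar>degree E n a - density n E * n\<bar> \<le> \<bar>e\<bar> * density n E * n"
  using quasirandom_common_nbhd[OF assms(1), of "{a}"] assms(2)
  by (simp add: card_common_nbhd_singleton mult.assoc)

lemma quasirandom_codegree_close:
  assumes "quasirandom n E e 2" "a < n" "b < n" "a \<noteq> b"
  shows "\<bar>codegree E n a b - density n E ^ 2 * n\<bar> \<le> \<bar>e\<bar> * density n E ^ 2 * n"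
  using quasirandom_common_nbhd[OF assms(1), of "{a, b}"] assms(2-4)
  by (simp add: card_common_nbhd_doubleton mult.assoc power2_eq_square)

lemma quasirandom_density_le_two:
  assumes "quasirandom n E e 2" "0 < n" "\<bar>e\<bar> \<le> 1 / 2"
  shows "density n E \<le> 2"
proof -
  have "density n E * n - \<bar>e\<bar> * density n E * n \<le> n"
    using quasirandom_degree_close[OF assms(1,2)] degree_le[of E n 0] by (simp add: abs_le_iff)
  moreover have "\<bar>e\<bar> * (density n E * n) \<le> 1 / 2 * (density n E * n)"
    using assms(3) density_nonneg by (intro mult_right_mono) auto
  ultimately have "density n E * n \<le> 2 * n" by (simp add: algebra_simps)
  then show ?thesis using assms(2) by simp
qed

lemma quasirandom_near_regular_graph:
  assumes "simple_graph n E" "quasirandom n E e 2" "0 < n" "\<bar>e\<bar> \<le> 1 / 2"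
  shows "near_regular_graph E n (density n E) (4 * \<bar>e\<bar>)"
proof
  have le_two: "density n E \<le> 2" using quasirandom_density_le_two[OF assms(2-4)] .
  show "E u v \<Longrightarrow> E v u" for u v using assms(1) by (simp add: simple_graph_def)
  show "0 \<le> density n E" "density n E \<le> 2" "0 \<le> 4 * \<bar>e\<bar>" using le_two density_nonneg by auto
  show "\<bar>degree E n a - density n E * n\<bar> \<le> 4 * \<bar>e\<bar> * n" if "a < n" for a
  proof -
    have "\<bar>e\<bar> * density n E \<le> \<bar>e\<bar> * 4" using le_two by (intro mult_left_mono) auto
    then show ?thesis
      using quasirandom_degree_close[OF assms(2) that] mult_right_mono[of _ _ "real n"] by force
  qed
  show "\<bar>codegree E n a b - density n E ^ 2 * n\<bar> \<le> 4 * \<bar>e\<bar> * n"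
    if "a < n" "b < n" "a \<noteq> b" for a b
  proof -
    have "density n E ^ 2 \<le> 2 ^ 2" using le_two density_nonneg by (intro power_mono) auto
    then have "\<bar>e\<bar> * density n E ^ 2 \<le> \<bar>e\<bar> * 4" by (intro mult_left_mono) auto
    then show ?thesis
      using quasirandom_codegree_close[OF assms(2) that] mult_right_mono[of _ _ "real n"] by force
  qed
qed

lemma triangle_count_quasirandom_ge:
  fixes \<delta> e :: real
  assumes "simple_graph n E" "quasirandom n E e 2"
    and X: "disjoint_pairs n X" and Y: "disjoint_pairs n Y" and Z: "disjoint_pairs n Z"
    and \<delta>: "0 < \<delta>" and n_large: "50 / \<delta>^2 \<le> n"
    and e: "\<bar>e\<bar> \<le> 1 / 2" "\<bar>e\<bar> \<le> \<delta>^2 / 2000"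
  shows "density n E ^ 3 * card X * card Y * card Z - \<delta> * real n ^ 3 \<le> real (triangle_count E X Y Z)"
proof -
  have n: "0 < n" using n_large \<delta> by (auto intro: ccontr)
  interpret near_regular_graph E n "density n E" "4 * \<bar>e\<bar>"
    using quasirandom_near_regular_graph[OF assms(1,2) n e(1)] .
  have "50 \<le> \<delta>^2 * n" using n_large \<delta> by (simp add: field_simps)
  then have "5 * real n^2 \<le> \<delta>^2 / 10 * n^3"
    using mult_right_mono[of 50 "\<delta>^2 * n" "real n^2"] by (simp add: power3_eq_cube power2_eq_square)
  moreover have "196 * \<bar>e\<bar> * n^3 \<le> \<delta>^2 / 10 * n^3"
    using e(2) by (intro mult_right_mono) auto
  ultimately have "(49 * (4 * \<bar>e\<bar>) * n^3 + 5 * n^2) / (2 * (\<delta> / 5)) \<le> (\<delta>^2 / 5 * n^3) / (2 * (\<delta> / 5))"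
    using \<delta> by (intro divide_right_mono) auto
  also have "\<dots> = \<delta> / 2 * n^3" using \<delta> by (simp add: field_simps power2_eq_square)
  finally have "(49 * (4 * \<bar>e\<bar>) * n^3 + 5 * n^2) / (2 * (\<delta> / 5)) \<le> \<delta> / 2 * n^3" .
  moreover have "5 * (\<delta> / 5) * n^3 / 2 = \<delta> / 2 * n^3" by simp
  ultimately show ?thesis
    using triangle_count_ge[OF X Y Z n, of "\<delta> / 5"] \<delta> by (simp only: of_nat_power) linarith
qed

theorem lemma5p7:
  fixes G :: "nat \<Rightarrow> nat \<Rightarrow> nat \<Rightarrow> bool"
    and eps :: "nat \<Rightarrow> real"
    and X Y Z :: "nat \<Rightarrow> (nat \<times> nat) set"
  assumes graph: "\<forall>n. simple_graph n (G n)"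
    and qr: "\<forall>n. quasirandom n (G n) (eps n) 2"
    and eps_lim: "eps \<longlonglongrightarrow> 0"
    and dens_lo: "\<exists>c>0. \<forall>\<^sub>F n in sequentially. density n (G n) \<ge> c"
    and dens_hi: "\<exists>c>0. \<forall>\<^sub>F n in sequentially. 1 - density n (G n) \<ge> c"
    and XYZ: "\<forall>n. disjoint_pairs n (X n) \<and> disjoint_pairs n (Y n) \<and> disjoint_pairs n (Z n)"
    and X_big: "\<exists>c>0. \<forall>\<^sub>F n in sequentially. real (card (X n)) \<ge> c * real n"
    and Y_big: "\<exists>c>0. \<forall>\<^sub>F n in sequentially. real (card (Y n)) \<ge> c * real n"
    and Z_big: "\<exists>c>0. \<forall>\<^sub>F n in sequentially. real (card (Z n)) \<ge> c * real n"
  shows "\<forall>\<delta>>0. \<forall>\<^sub>F n in sequentially.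
           real (triangle_count (G n) (X n) (Y n) (Z n)) \<ge>
             density n (G n) ^ 3 * real (card (X n)) * real (card (Y n)) * real (card (Z n)) / 8
             - \<delta> * real n ^ 3"
proof (intro allI impI)
  fix \<delta> :: real
  assume \<delta>: "0 < \<delta>"
  have "\<forall>\<^sub>F n in sequentially. dist (eps n) 0 < min (1 / 2) (\<delta>^2 / 2000)"
    using \<delta> by (intro tendstoD[OF eps_lim]) simp
  moreover have "\<forall>\<^sub>F n in sequentially. 50 / \<delta>^2 \<le> real n"
    using filterlim_real_sequentially unfolding filterlim_at_top by blast
  ultimately show "\<forall>\<^sub>F n in sequentially. real (triangle_count (G n) (X n) (Y n) (Z n)) \<ge>
      density n (G n) ^ 3 * real (card (X n)) * real (card (Y n)) * real (card (Z n)) / 8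
      - \<delta> * real n ^ 3"
  proof eventually_elim
    case (elim n)
    have e: "\<bar>eps n\<bar> \<le> 1 / 2" "\<bar>eps n\<bar> \<le> \<delta>^2 / 2000"
      using elim(1) by (auto simp: dist_real_def)
    have "disjoint_pairs n (X n)" "disjoint_pairs n (Y n)" "disjoint_pairs n (Z n)"
      using XYZ by auto
    from triangle_count_quasirandom_ge[OF graph[rule_format] qr[rule_format] this \<delta> elim(2) e]
    have "density n (G n) ^ 3 * card (X n) * card (Y n) * card (Z n) - \<delta> * real n ^ 3
        \<le> real (triangle_count (G n) (X n) (Y n) (Z n))" .
    moreover have "0 \<le> density n (G n) ^ 3 * card (X n) * card (Y n) * card (Z n)"
      by (simp add: density_nonneg)
    ultimately show ?case by linarith
  qed
qed

end
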